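(* Let $a/b$ be a rational number in lowest terms with $b\geq1$. Suppose $\zeta>0$ satisfies $\zeta\in\mathscr{L}$ and $\zeta^{a/b}\in\mathscr{L}$. Then for every $\eta>0$ the inequality $|q^b\zeta^a-p^b|\leq q^{-\eta}$ has a solution in coprime integers $p,q$ with $q\geq1$. Moreover, for fixed $\eta>b$, if $(p,q)$ is such a solution with $q$ sufficiently large, then $p^b/q^b$ is a convergent of the continued fraction expansion of $\zeta^a$.
   Context: $\mathscr{L}$ is the set of Liouville numbers (real irrational $\zeta$ such that for every $\eta>0$ there are infinitely many rationals $y/x$, $x\geq1$, with $|\zeta-y/x|\leq x^{-\eta}$). *)

theory Defs
  imports Complex_Main "HOL-Computational_Algebra.Primes"
begin

definition liouville :: "real \<Rightarrow> bool" where
  "liouville \<zeta> \<longleftrightarrow> \<zeta> \<notin> \<rat> \<and>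
     (\<forall>\<eta>>0. infinite {r :: rat. \<exists>x y :: int. x \<ge> 1 \<and> r = of_int y / of_int x \<and>
                 \<bar>\<zeta> - real_of_int y / real_of_int x\<bar> \<le> real_of_int x powr (-\<eta>)})"

fun cf_rem :: "real \<Rightarrow> nat \<Rightarrow> real" where
  "cf_rem x 0 = x"
| "cf_rem x (Suc n) = 1 / (cf_rem x n - of_int \<lfloor>cf_rem x n\<rfloor>)"

definition cf_digit :: "real \<Rightarrow> nat \<Rightarrow> int" where
  "cf_digit x n = \<lfloor>cf_rem x n\<rfloor>"

text \<open>Numerators p_n and denominators q_n of the convergents
  (p_(-1) = 1, p_(-2) = 0, q_(-1) = 0, q_(-2) = 1).\<close>
fun cf_num :: "real \<Rightarrow> nat \<Rightarrow> int" where
  "cf_num x 0 = cf_digit x 0"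
| "cf_num x (Suc 0) = cf_digit x 1 * cf_digit x 0 + 1"
| "cf_num x (Suc (Suc n)) = cf_digit x (Suc (Suc n)) * cf_num x (Suc n) + cf_num x n"

fun cf_den :: "real \<Rightarrow> nat \<Rightarrow> int" where
  "cf_den x 0 = 1"
| "cf_den x (Suc 0) = cf_digit x 1"
| "cf_den x (Suc (Suc n)) = cf_digit x (Suc (Suc n)) * cf_den x (Suc n) + cf_den x n"

text \<open>r is a convergent of the continued fraction of x: r = p_n/q_n for some n such that
  the expansion has not terminated before step n (x_k is not an integer for k < n).\<close>
definition is_convergent :: "real \<Rightarrow> real \<Rightarrow> bool" where
  "is_convergent x r \<longleftrightarrow> (\<exists>n. (\<forall>k<n. cf_rem x k \<notin> \<int>) \<and>
       r = real_of_int (cf_num x n) / real_of_int (cf_den x n))"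

end

theory Submission
  imports Defs
begin

text \<open>Put \<open>\<theta> = \<zeta>^(a/b)\<close>, so that \<open>\<theta>^b = \<zeta>^a\<close>; only the Liouville property of \<open>\<theta>\<close> is
  needed. It provides coprime approximations \<open>p/q\<close> with \<open>|\<theta> - p/q| \<le> q^-(\<eta>+b+1)\<close> and \<open>q\<close>
  arbitrarily large, and since \<open>t \<mapsto> t^b\<close> is Lipschitz near \<open>\<theta>\<close> these solve
  \<open>|q^b \<zeta>^a - p^b| \<le> q^-\<eta>\<close>. Conversely, for \<open>\<eta> > b\<close> and \<open>q\<close> large a solution gives
  \<open>|\<zeta>^a - p^b/q^b| < 1/(2 q^(2b))\<close>, so \<open>p^b/q^b\<close> is a convergent by Legendre's theorem.
  Legendre's theorem rests on the best-approximation property of convergents: if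
  \<open>q\<^sub>n \<le> B < q\<^sub>n\<^sub>+\<^sub>1\<close>, write \<open>(A, B)\<close> in the unimodular basis \<open>(p\<^sub>n, q\<^sub>n), (p\<^sub>n\<^sub>+\<^sub>1, q\<^sub>n\<^sub>+\<^sub>1)\<close>;
  the coefficients have opposite signs while the errors \<open>q\<^sub>k x - p\<^sub>k\<close> alternate in sign,
  so \<open>|q\<^sub>n x - p\<^sub>n| \<le> |B x - A|\<close> unless \<open>A/B = p\<^sub>n/q\<^sub>n\<close>.\<close>

text \<open>The recurrences of cf_num and cf_den started two steps earlier, from
  \<open>p\<^sub>-\<^sub>2 = 0, p\<^sub>-\<^sub>1 = 1\<close> and \<open>q\<^sub>-\<^sub>2 = 1, q\<^sub>-\<^sub>1 = 0\<close>; index \<open>n + 2\<close> here is index \<open>n\<close> there.\<close>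

fun cf_num_ext :: "real \<Rightarrow> nat \<Rightarrow> int" where
  "cf_num_ext x 0 = 0"
| "cf_num_ext x (Suc 0) = 1"
| "cf_num_ext x (Suc (Suc n)) = cf_digit x n * cf_num_ext x (Suc n) + cf_num_ext x n"

fun cf_den_ext :: "real \<Rightarrow> nat \<Rightarrow> int" where
  "cf_den_ext x 0 = 1"
| "cf_den_ext x (Suc 0) = 0"
| "cf_den_ext x (Suc (Suc n)) = cf_digit x n * cf_den_ext x (Suc n) + cf_den_ext x n"

declare cf_rem.simps(2) [simp del] cf_num_ext.simps(3) [simp del] cf_den_ext.simps(3) [simp del]

lemma cf_num_eq_ext: "cf_num x n = cf_num_ext x (Suc (Suc n))"
  by (induction x n rule: cf_num.induct) (simp_all add: cf_num_ext.simps)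

lemma cf_den_eq_ext: "cf_den x n = cf_den_ext x (Suc (Suc n))"
  by (induction x n rule: cf_den.induct) (simp_all add: cf_den_ext.simps)

lemma cf_ext_det:
  "cf_num_ext x (Suc n) * cf_den_ext x n - cf_num_ext x n * cf_den_ext x (Suc n) = (-1) ^ n"
  by (induction n) (simp_all add: cf_num_ext.simps cf_den_ext.simps algebra_simps)

lemma cf_rem_Suc_eq: "cf_rem x (Suc k) = 1 / frac (cf_rem x k)"
  by (simp add: cf_rem.simps frac_def)

lemma cf_rem_Suc_gt_1:
  assumes "cf_rem x k \<notin> \<int>"
  shows "cf_rem x (Suc k) > 1"
proof -
  have "frac (cf_rem x k) > 0" "frac (cf_rem x k) < 1"
    using assms frac_lt_1[of "cf_rem x k"] by (auto simp: less_le frac_eq_0_iff)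
  then show ?thesis
    by (simp add: cf_rem_Suc_eq less_divide_eq)
qed

lemma cf_digit_Suc_ge_1: "cf_rem x k \<notin> \<int> \<Longrightarrow> cf_digit x (Suc k) \<ge> 1"
  using cf_rem_Suc_gt_1[of x k] unfolding cf_digit_def by linarith

lemma cf_rem_eq_digit_plus:
  assumes "cf_rem x k \<notin> \<int>"
  shows "cf_rem x k = cf_digit x k + 1 / cf_rem x (Suc k)"
  using assms by (simp add: cf_rem_Suc_eq cf_digit_def frac_def)

lemma cf_eq_via_rem:
  assumes "\<forall>k<n. cf_rem x k \<notin> \<int>"
  shows "x = (cf_rem x n * cf_num_ext x (Suc n) + cf_num_ext x n)
             / (cf_rem x n * cf_den_ext x (Suc n) + cf_den_ext x n)"
  using assms
proof (induction n)
  case 0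
  then show ?case by simp
next
  case (Suc n)
  let ?r = "cf_rem x n" and ?s = "cf_rem x (Suc n)" and ?d = "real_of_int (cf_digit x n)"
  let ?P0 = "real_of_int (cf_num_ext x n)" and ?P1 = "real_of_int (cf_num_ext x (Suc n))"
  let ?Q0 = "real_of_int (cf_den_ext x n)" and ?Q1 = "real_of_int (cf_den_ext x (Suc n))"
  have r: "?r \<notin> \<int>"
    using Suc.prems by simp
  have s: "?s \<noteq> 0"
    using cf_rem_Suc_gt_1[OF r] by linarith
  have "x = (?r * ?P1 + ?P0) / (?r * ?Q1 + ?Q0)"
    using Suc by simp
  also have "\<dots> = ((?d + 1 / ?s) * ?P1 + ?P0) / ((?d + 1 / ?s) * ?Q1 + ?Q0)"
    unfolding cf_rem_eq_digit_plus[OF r] ..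
  also have "\<dots> = ((?s * (?d * ?P1 + ?P0) + ?P1) / ?s) / ((?s * (?d * ?Q1 + ?Q0) + ?Q1) / ?s)"
    using s by (simp add: field_simps)
  also have "\<dots> = (?s * (?d * ?P1 + ?P0) + ?P1) / (?s * (?d * ?Q1 + ?Q0) + ?Q1)"
    using s by simp
  finally show ?case
    by (simp add: cf_num_ext.simps cf_den_ext.simps)
qed

lemma cf_eq_if_rem_in_Ints:
  assumes "\<forall>k<n. cf_rem x k \<notin> \<int>" and "cf_rem x n \<in> \<int>"
  shows "x = cf_num_ext x (Suc (Suc n)) / cf_den_ext x (Suc (Suc n))"
proof -
  obtain k where k: "cf_rem x n = of_int k"
    using assms(2) by (elim Ints_cases)
  then have "cf_digit x n = k"
    by (simp add: cf_digit_def)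
  then show ?thesis
    using cf_eq_via_rem[OF assms(1)] k by (simp add: cf_num_ext.simps cf_den_ext.simps)
qed

lemma cf_den_ext_bounds:
  assumes "\<forall>k<n. cf_rem x k \<notin> \<int>"
  shows "0 \<le> cf_den_ext x (Suc n) \<and> (0 < n \<longrightarrow> 1 \<le> cf_den_ext x (Suc n))
    \<and> 1 \<le> cf_den_ext x (Suc (Suc n)) \<and> int n \<le> cf_den_ext x (Suc (Suc n))"
  using assms
proof (induction n)
  case 0
  then show ?case by (simp add: cf_den_ext.simps)
next
  case (Suc n)
  have "cf_digit x (Suc n) \<ge> 1"
    using cf_digit_Suc_ge_1 Suc.prems by simp
  moreover have "0 \<le> cf_den_ext x (Suc n)" "1 \<le> cf_den_ext x (Suc (Suc n))"
    "int n \<le> cf_den_ext x (Suc (Suc n))" "0 < n \<longrightarrow> 1 \<le> cf_den_ext x (Suc n)"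
    using Suc by simp_all
  ultimately have "cf_den_ext x (Suc (Suc (Suc n))) \<ge> cf_den_ext x (Suc (Suc n)) + cf_den_ext x (Suc n)"
    by (simp add: cf_den_ext.simps mult_le_cancel_right1)
  with \<open>1 \<le> cf_den_ext x (Suc (Suc n))\<close> \<open>int n \<le> cf_den_ext x (Suc (Suc n))\<close>
    \<open>0 \<le> cf_den_ext x (Suc n)\<close> \<open>0 < n \<longrightarrow> 1 \<le> cf_den_ext x (Suc n)\<close>
  show ?case
    by (cases n) auto
qed

lemma cf_errors_opposite_sign:
  fixes x :: real
  assumes "\<forall>k<Suc n. cf_rem x k \<notin> \<int>"
  shows "(cf_den_ext x (Suc (Suc n)) * x - cf_num_ext x (Suc (Suc n)))
       * (cf_den_ext x (Suc (Suc (Suc n))) * x - cf_num_ext x (Suc (Suc (Suc n)))) \<le> 0"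
proof -
  let ?P0 = "real_of_int (cf_num_ext x (Suc (Suc n)))"
  let ?P1 = "real_of_int (cf_num_ext x (Suc (Suc (Suc n))))"
  let ?Q0 = "real_of_int (cf_den_ext x (Suc (Suc n)))"
  let ?Q1 = "real_of_int (cf_den_ext x (Suc (Suc (Suc n))))"
  have Q0: "?Q0 \<ge> 1" and Q1: "?Q1 \<ge> 1"
    using cf_den_ext_bounds[of n x] cf_den_ext_bounds[OF assms] assms
    by simp_all
  show ?thesis
  proof (cases "cf_rem x (Suc n) \<in> \<int>")
    case True
    then have "x = ?P1 / ?Q1"
      using cf_eq_if_rem_in_Ints[OF assms] by simp
    then have "?Q1 * x - ?P1 = 0"
      using Q1 by (simp add: field_simps)
    then show ?thesis
      by simp
  next
    case False
    let ?s = "cf_rem x (Suc (Suc n))"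
    have s: "?s > 1"
      using cf_rem_Suc_gt_1[OF False] .
    with Q0 Q1 have "?s * ?Q1 + ?Q0 > 0"
      by (smt (verit) mult_pos_pos)
    moreover have "x = (?s * ?P1 + ?P0) / (?s * ?Q1 + ?Q0)"
      using cf_eq_via_rem[of "Suc (Suc n)" x] assms False less_Suc_eq by auto
    ultimately have "?Q0 * x - ?P0 = - ?s * (?Q1 * x - ?P1)"
      by (simp add: field_simps)
    then have "(?Q0 * x - ?P0) * (?Q1 * x - ?P1) = - (?s * (?Q1 * x - ?P1)\<^sup>2)"
      by (simp add: power2_eq_square)
    then show ?thesis
      using s by simp
  qed
qed

lemma cf_last_den_le:
  fixes B :: int
  assumes "B \<ge> 1"
  obtains n where "\<forall>k<n. cf_rem x k \<notin> \<int>" and "cf_den_ext x (Suc (Suc n)) \<le> B"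
    and "cf_rem x n \<notin> \<int> \<Longrightarrow> B < cf_den_ext x (Suc (Suc (Suc n)))"
proof -
  define S where "S = {n. (\<forall>k<n. cf_rem x k \<notin> \<int>) \<and> cf_den_ext x (Suc (Suc n)) \<le> B}"
  have "0 \<in> S"
    using assms by (simp add: S_def cf_den_ext.simps)
  have "int n \<le> B" if "n \<in> S" for n
    using that cf_den_ext_bounds[of n x] by (auto simp: S_def)
  then have "S \<subseteq> {..nat B}"
    by fastforce
  then have "finite S"
    by (rule finite_subset) simp
  define n where "n = Max S"
  have "n \<in> S"
    unfolding n_def using \<open>finite S\<close> \<open>0 \<in> S\<close> by (intro Max_in) auto
  moreover have "Suc n \<notin> S"
    using \<open>finite S\<close> n_def Max_ge by (metis Suc_n_not_le_n)
  ultimately show ?thesis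
    using that less_Suc_eq by (auto simp: S_def)
qed

lemma rat_eq_if_better_approx:
  fixes A B P Q :: int and x :: real
  assumes "1 \<le> Q" "Q \<le> B" "\<bar>Q * x - P\<bar> \<le> \<bar>B * x - A\<bar>" "\<bar>x - A / B\<bar> < 1 / (2 * B\<^sup>2)"
  shows "real_of_int A / B = P / Q"
proof (rule ccontr)
  assume ne: "real_of_int A / B \<noteq> P / Q"
  have B: "real_of_int B > 0" and Q: "real_of_int Q > 0"
    using assms by auto
  have "A * Q - B * P \<noteq> 0"
    using ne B Q by (auto simp: field_simps simp flip: of_int_mult)
  then have "1 \<le> \<bar>real_of_int (A * Q - B * P)\<bar>"
    by linarith
  also have "real_of_int (A * Q - B * P) = Q * (A - B * x) + B * (Q * x - P)"
    by (simp add: algebra_simps)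
  also have "\<bar>\<dots>\<bar> \<le> Q * \<bar>B * x - A\<bar> + B * \<bar>Q * x - P\<bar>"
    using B Q abs_triangle_ineq[of "Q * (A - B * x)" "B * (Q * x - P)"]
    by (simp add: abs_mult abs_minus_commute)
  also have "\<dots> \<le> Q * \<bar>B * x - A\<bar> + B * \<bar>B * x - A\<bar>"
    using B assms(3) by simp
  also have "\<dots> \<le> 2 * B * \<bar>B * x - A\<bar>"
    using assms(2) by (simp add: mult_right_mono)
  also have "\<bar>B * x - A\<bar> = B * \<bar>x - A / B\<bar>"
    using B by (simp add: abs_mult flip: abs_of_pos right_diff_distrib) (simp add: field_simps)
  also have "2 * B * (B * \<bar>x - A / B\<bar>) = 2 * B\<^sup>2 * \<bar>x - A / B\<bar>"
    by (simp add: power2_eq_square)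
  also have "\<dots> < 2 * B\<^sup>2 * (1 / (2 * B\<^sup>2))"
    using B assms(4) by (intro mult_strict_left_mono) auto
  also have "\<dots> = 1"
    using B by simp
  finally show False
    by simp
qed

lemma lincomb_coeffs_opposite_sign:
  fixes \<alpha> \<beta> B Q0 Q1 :: int
  assumes "B = \<alpha> * Q0 + \<beta> * Q1" "1 \<le> Q0" "Q0 \<le> B" "B < Q1" "\<beta> \<noteq> 0"
  shows "\<alpha> * \<beta> < 0"
proof (rule ccontr)
  assume "\<not> \<alpha> * \<beta> < 0"
  with \<open>\<beta> \<noteq> 0\<close> have "0 \<le> \<alpha> \<and> 0 < \<beta> \<or> \<alpha> \<le> 0 \<and> \<beta> < 0"
    by (auto simp: not_less zero_le_mult_iff)
  then show False
  proof
    assume "0 \<le> \<alpha> \<and> 0 < \<beta>"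
    then have "0 \<le> \<alpha> * Q0" "Q1 \<le> \<beta> * Q1"
      using assms by auto
    then show False
      using assms by linarith
  next
    assume "\<alpha> \<le> 0 \<and> \<beta> < 0"
    then have "\<alpha> * Q0 \<le> 0" "\<beta> * Q1 < 0"
      using assms by (auto simp: mult_le_0_iff mult_neg_pos)
    then show False
      using assms by linarith
  qed
qed

lemma abs_le_abs_add_if_same_sign:
  fixes u v :: "'a :: linordered_idom"
  shows "0 \<le> u * v \<Longrightarrow> \<bar>u\<bar> \<le> \<bar>u + v\<bar>"
  by (auto simp: zero_le_mult_iff abs_if)

lemma best_approx_of_unimodular:
  fixes A B P0 Q0 P1 Q1 :: int and x :: real
  assumes det: "(P1 * Q0 - P0 * Q1)\<^sup>2 = 1"
    and Q: "1 \<le> Q0" "Q0 \<le> B" "B < Q1"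
    and sign: "(Q0 * x - P0) * (Q1 * x - P1) \<le> 0"
  shows "\<bar>Q0 * x - P0\<bar> \<le> \<bar>B * x - A\<bar> \<or> real_of_int A / B = P0 / Q0"
proof -
  define D where "D = P1 * Q0 - P0 * Q1"
  define \<alpha> where "\<alpha> = (B * P1 - A * Q1) * D"
  define \<beta> where "\<beta> = (A * Q0 - B * P0) * D"
  have "\<alpha> * P0 + \<beta> * P1 = A * D\<^sup>2" "\<alpha> * Q0 + \<beta> * Q1 = B * D\<^sup>2"
    by (simp_all add: \<alpha>_def \<beta>_def D_def power2_eq_square algebra_simps)
  then have A: "A = \<alpha> * P0 + \<beta> * P1" and B: "B = \<alpha> * Q0 + \<beta> * Q1"
    using det by (simp_all add: D_def)
  show ?thesis
  proof (cases "\<beta> = 0")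
    case True
    with A B Q show ?thesis
      by auto
  next
    case False
    have "\<alpha> * \<beta> < 0"
      using lincomb_coeffs_opposite_sign[OF B Q False] .
    then have "real_of_int \<alpha> * \<beta> * ((Q0 * x - P0) * (Q1 * x - P1)) \<ge> 0"
      using sign by (intro mult_nonpos_nonpos) (simp_all flip: of_int_mult)
    then have "0 \<le> (\<alpha> * (Q0 * x - P0)) * (\<beta> * (Q1 * x - P1))"
      by (simp add: algebra_simps)
    then have "\<bar>\<alpha> * (Q0 * x - P0)\<bar> \<le> \<bar>\<alpha> * (Q0 * x - P0) + \<beta> * (Q1 * x - P1)\<bar>"
      by (rule abs_le_abs_add_if_same_sign)
    also have "\<alpha> * (Q0 * x - P0) + \<beta> * (Q1 * x - P1) = B * x - A"
      using A B by (simp add: algebra_simps)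
    finally have "\<bar>\<alpha>\<bar> * \<bar>Q0 * x - P0\<bar> \<le> \<bar>B * x - A\<bar>"
      by (simp add: abs_mult)
    moreover have "1 \<le> \<bar>real_of_int \<alpha>\<bar>"
      using \<open>\<alpha> * \<beta> < 0\<close> by (cases "\<alpha> = 0") auto
    ultimately show ?thesis
      using mult_right_mono[of 1 "\<bar>real_of_int \<alpha>\<bar>" "\<bar>Q0 * x - P0\<bar>"] by simp
  qed
qed

lemma is_convergent_if_close:
  fixes A B :: int and x :: real
  assumes "B \<ge> 1" and close: "\<bar>x - A / B\<bar> < 1 / (2 * B\<^sup>2)"
  shows "is_convergent x (A / B)"
proof -
  obtain n where valid: "\<forall>k<n. cf_rem x k \<notin> \<int>" and QB: "cf_den_ext x (Suc (Suc n)) \<le> B"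
    and QB': "cf_rem x n \<notin> \<int> \<Longrightarrow> B < cf_den_ext x (Suc (Suc (Suc n)))"
    using cf_last_den_le[OF assms(1)] by blast
  let ?P0 = "cf_num_ext x (Suc (Suc n))" and ?Q0 = "cf_den_ext x (Suc (Suc n))"
  have Q0: "1 \<le> ?Q0"
    using cf_den_ext_bounds[OF valid] by simp
  have "\<bar>?Q0 * x - ?P0\<bar> \<le> \<bar>B * x - A\<bar> \<or> real_of_int A / B = ?P0 / ?Q0"
  proof (cases "cf_rem x n \<in> \<int>")
    case True
    then have "x = ?P0 / ?Q0"
      using cf_eq_if_rem_in_Ints[OF valid] by simp
    then have "?Q0 * x - ?P0 = 0"
      using Q0 by (simp add: field_simps)
    then show ?thesis
      by simp
  next
    case False
    then have "\<forall>k<Suc n. cf_rem x k \<notin> \<int>"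
      using valid less_Suc_eq by auto
    moreover have "(cf_num_ext x (Suc (Suc (Suc n))) * ?Q0 - ?P0 * cf_den_ext x (Suc (Suc (Suc n))))\<^sup>2 = 1"
      using cf_ext_det[of x "Suc (Suc n)"] by (simp flip: power_mult power_mult_distrib)
    ultimately show ?thesis
      using best_approx_of_unimodular Q0 QB QB'[OF False] cf_errors_opposite_sign by blast
  qed
  then have "real_of_int A / B = ?P0 / ?Q0"
    using rat_eq_if_better_approx[OF Q0 QB _ close] by auto
  then show ?thesis
    using valid unfolding is_convergent_def by (auto simp: cf_num_eq_ext cf_den_eq_ext)
qed

lemma is_convergent_power_ratio:
  fixes X \<eta> :: real and b :: nat and p q :: int
  assumes "\<eta> > b" and "q \<ge> 1" and "q \<ge> 3 powr (1 / (\<eta> - b))"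
    and err: "\<bar>real_of_int q ^ b * X - real_of_int p ^ b\<bar> \<le> real_of_int q powr - \<eta>"
  shows "is_convergent X (real_of_int p ^ b / real_of_int q ^ b)"
proof -
  define r where "r = real_of_int q"
  have r: "r \<ge> 1" "r ^ b \<ge> 1"
    using assms(2) by (simp_all add: r_def)
  have "r powr (\<eta> - b) \<ge> (3 powr (1 / (\<eta> - b))) powr (\<eta> - b)"
    using assms(1,3) by (simp add: r_def powr_mono2)
  then have "r powr (\<eta> - b) \<ge> 3"
    using assms(1) by (simp add: powr_powr)
  then have "r powr (\<eta> - b) * r ^ b \<ge> 3 * r ^ b"
    using r by (simp add: mult_right_mono)
  moreover have "r powr \<eta> = r powr (\<eta> - b) * r powr real b"
    by (simp flip: powr_add)
  moreover have "r powr real b = r ^ b"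
    using r by (simp add: powr_realpow)
  ultimately have big: "r powr \<eta> \<ge> 3 * r ^ b"
    by simp
  have "\<bar>X - p ^ b / r ^ b\<bar> = \<bar>r ^ b * X - p ^ b\<bar> / r ^ b"
    using r by (simp add: field_simps abs_divide)
  also have "\<dots> \<le> (1 / r powr \<eta>) / r ^ b"
    using err r(2) by (intro divide_right_mono) (simp_all add: r_def powr_minus_divide)
  also have "\<dots> \<le> (1 / (3 * r ^ b)) / r ^ b"
    using big r by (intro divide_right_mono divide_left_mono) auto
  also have "\<dots> < 1 / (2 * (r ^ b)\<^sup>2)"
    using r by (simp add: field_simps power2_eq_square)
  finally have "\<bar>X - of_int (p ^ b) / of_int (q ^ b)\<bar> < 1 / (2 * (of_int (q ^ b))\<^sup>2)"
    by (simp add: r_def)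
  then show ?thesis
    using is_convergent_if_close[of "q ^ b" X "p ^ b"] assms(2) by simp
qed

lemma abs_power_diff_le:
  fixes u v M :: real
  assumes "\<bar>u\<bar> \<le> M" "\<bar>v\<bar> \<le> M"
  shows "\<bar>u ^ Suc n - v ^ Suc n\<bar> \<le> Suc n * M ^ n * \<bar>u - v\<bar>"
proof (induction n)
  case 0
  then show ?case by simp
next
  case (Suc n)
  have "u ^ Suc (Suc n) - v ^ Suc (Suc n) = u * (u ^ Suc n - v ^ Suc n) + v ^ Suc n * (u - v)"
    by (simp add: algebra_simps)
  then have "\<bar>u ^ Suc (Suc n) - v ^ Suc (Suc n)\<bar>
      \<le> \<bar>u\<bar> * \<bar>u ^ Suc n - v ^ Suc n\<bar> + \<bar>v\<bar> ^ Suc n * \<bar>u - v\<bar>"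
    by (metis abs_mult abs_triangle_ineq power_abs)
  also have "\<dots> \<le> M * (Suc n * M ^ n * \<bar>u - v\<bar>) + M ^ Suc n * \<bar>u - v\<bar>"
    using Suc assms by (intro add_mono mult_mono power_mono) auto
  also have "\<dots> = Suc (Suc n) * M ^ Suc n * \<bar>u - v\<bar>"
    by (simp add: algebra_simps)
  finally show ?case .
qed

lemma power_error_le_if_close:
  fixes \<theta> \<eta> :: real and b :: nat and p q :: int
  assumes "b \<ge> 1" "\<eta> \<ge> 0" "q \<ge> 1" and q_big: "q \<ge> b * (\<bar>\<theta>\<bar> + 1) ^ (b - 1)"
    and close: "\<bar>\<theta> - p / q\<bar> \<le> q powr - (\<eta> + b + 1)"
  shows "\<bar>real_of_int q ^ b * \<theta> ^ b - real_of_int p ^ b\<bar> \<le> real_of_int q powr - \<eta>"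
proof -
  define r where "r = real_of_int q"
  define C where "C = b * (\<bar>\<theta>\<bar> + 1) ^ (b - 1)"
  have r: "r \<ge> 1" "r \<ge> C" "C \<ge> 0"
    using assms(3) q_big by (simp_all add: r_def C_def)
  have "r powr - (\<eta> + b + 1) \<le> r powr 0"
    using r assms(2) by (intro powr_mono) auto
  then have "\<bar>p / r\<bar> \<le> \<bar>\<theta>\<bar> + 1"
    using close r by (simp add: r_def)
  then have "\<bar>\<theta> ^ b - (p / r) ^ b\<bar> \<le> C * \<bar>\<theta> - p / r\<bar>"
    using abs_power_diff_le[of \<theta> "\<bar>\<theta>\<bar> + 1" "p / r" "b - 1"] assms(1) by (simp add: C_def)
  moreover have "r ^ b * \<theta> ^ b - p ^ b = r ^ b * (\<theta> ^ b - (p / r) ^ b)"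
    using r by (simp add: power_divide field_simps)
  ultimately have "\<bar>r ^ b * \<theta> ^ b - p ^ b\<bar> \<le> r ^ b * (C * \<bar>\<theta> - p / r\<bar>)"
    using r by (simp add: abs_mult mult_left_mono)
  also have "\<dots> \<le> r ^ b * (C * r powr - (\<eta> + b + 1))"
    using close r by (simp add: r_def mult_left_mono)
  also have "\<dots> = C * (r powr real b * r powr - (\<eta> + b + 1))"
    using r by (simp add: powr_realpow)
  also have "r powr real b * r powr - (\<eta> + b + 1) = r powr (- \<eta> - 1)"
    by (simp flip: powr_add)
  also have "\<dots> = r powr - \<eta> / r"
    using r by (simp add: powr_diff)
  also have "C * (r powr - \<eta> / r) = (C / r) * r powr - \<eta>"
    by simp
  also have "\<dots> \<le> r powr - \<eta>"
    using r by (intro mult_left_le_one_le) auto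
  finally show ?thesis
    by (simp add: r_def)
qed

lemma finite_rats_bounded_denom:
  fixes M :: real and K :: int
  shows "finite {r :: rat. \<bar>of_rat r\<bar> \<le> M \<and> snd (quotient_of r) \<le> K}"
proof -
  define N where "N = \<lceil>M * K\<rceil>"
  have "r \<in> (\<lambda>(p, q). of_int p / of_int q) ` ({-N..N} \<times> {1..K})"
    if "\<bar>of_rat r\<bar> \<le> M" "snd (quotient_of r) \<le> K" for r :: rat
  proof -
    obtain p q where pq: "quotient_of r = (p, q)"
      by fastforce
    have q: "0 < q" "q \<le> K" and r: "r = of_int p / of_int q"
      using pq that(2) quotient_of_denom_pos quotient_of_div by auto
    have "\<bar>real_of_int p\<bar> = \<bar>of_rat r\<bar> * q"
      using q by (simp add: r of_rat_divide abs_mult)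
    also have "\<dots> \<le> M * K"
      using q that(1) order_trans[OF abs_ge_zero that(1)] by (intro mult_mono) simp_all
    finally have "\<bar>p\<bar> \<le> N"
      unfolding N_def by linarith
    then show ?thesis
      using q r by (intro image_eqI[of _ _ "(p, q)"]) auto
  qed
  then have "{r :: rat. \<bar>of_rat r\<bar> \<le> M \<and> snd (quotient_of r) \<le> K}
      \<subseteq> (\<lambda>(p, q). of_int p / of_int q) ` ({-N..N} \<times> {1..K})"
    by blast
  then show ?thesis
    by (rule finite_subset) simp
qed

lemma quotient_of_denom_le:
  fixes x y :: int
  assumes "x \<ge> 1" and "quotient_of (of_int y / of_int x) = (p, q)"
  shows "q \<le> x"
proof -
  have "q > 0" "coprime p q" and "of_int y / of_int x = (of_int p / of_int q :: rat)"
    using assms(2) quotient_of_denom_pos quotient_of_coprime quotient_of_div by blast+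
  then have "p * x = y * q"
    using assms(1) by (simp add: field_simps flip: of_int_mult)
  then have "q dvd p * x"
    by simp
  then have "q dvd x"
    using \<open>coprime p q\<close> by (simp add: coprime_dvd_mult_right_iff coprime_commute)
  then show ?thesis
    using assms(1) by (simp add: zdvd_imp_le)
qed

lemma liouville_coprime_approx:
  fixes \<theta> \<mu> :: real and K :: int
  assumes "liouville \<theta>" and "\<mu> > 0"
  obtains p q :: int where "coprime p q" "q > 0" "q > K" "\<bar>\<theta> - p / q\<bar> \<le> q powr - \<mu>"
proof -
  define L where "L = {r :: rat. \<exists>x y :: int. x \<ge> 1 \<and> r = of_int y / of_int x \<and>
                 \<bar>\<theta> - real_of_int y / real_of_int x\<bar> \<le> real_of_int x powr - \<mu>}"
  define F where "F = {r :: rat. \<bar>of_rat r\<bar> \<le> \<bar>\<theta>\<bar> + 1 \<and> snd (quotient_of r) \<le> K}"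
  have "infinite L"
    using assms unfolding liouville_def L_def by blast
  moreover have "finite F"
    unfolding F_def by (rule finite_rats_bounded_denom)
  ultimately obtain r where "r \<in> L" "r \<notin> F"
    by (metis finite_subset subsetI)
  then obtain x y :: int where x: "x \<ge> 1" and r: "r = of_int y / of_int x"
    and approx: "\<bar>\<theta> - y / x\<bar> \<le> x powr - \<mu>"
    unfolding L_def by blast
  obtain p q where pq: "quotient_of r = (p, q)"
    by fastforce
  have q: "q > 0" "coprime p q" "q \<le> x"
    using pq quotient_of_denom_pos quotient_of_coprime quotient_of_denom_le[OF x] r by blast+
  have "real_of_int p / q = of_rat r"
    using quotient_of_div[OF pq] by (simp add: of_rat_divide)
  also have "\<dots> = y / x"
    using r by (simp add: of_rat_divide)
  finally have pq_eq: "real_of_int p / q = y / x" .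
  have "x powr - \<mu> \<le> q powr - \<mu>"
    using q x assms(2) by (intro powr_mono2') auto
  then have close: "\<bar>\<theta> - p / q\<bar> \<le> q powr - \<mu>"
    using approx pq_eq by simp
  have "x powr - \<mu> \<le> 1"
    using powr_mono[of "- \<mu>" 0 "real_of_int x"] x assms(2) by simp
  then have "\<bar>of_rat r\<bar> \<le> \<bar>\<theta>\<bar> + 1"
    using approx pq_eq \<open>real_of_int p / q = of_rat r\<close> by linarith
  then have "q > K"
    using \<open>r \<notin> F\<close> pq by (auto simp: F_def)
  then show ?thesis
    using that q close by blast
qed

theorem lemma6p4:
  fixes a :: int and b :: nat and \<zeta> :: real
  assumes "b \<ge> 1" and "coprime a (int b)"
    and "\<zeta> > 0" and "liouville \<zeta>" and "liouville (\<zeta> powr (real_of_int a / real b))"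
  shows "(\<forall>\<eta>>0. \<exists>p q :: int. coprime p q \<and> q \<ge> 1 \<and>
            \<bar>real_of_int q ^ b * \<zeta> powr real_of_int a - real_of_int p ^ b\<bar>
              \<le> real_of_int q powr (-\<eta>))
       \<and> (\<forall>\<eta>>real b. \<exists>Q. \<forall>p q :: int. coprime p q \<and> q \<ge> 1 \<and> real_of_int q \<ge> Q \<and>
            \<bar>real_of_int q ^ b * \<zeta> powr real_of_int a - real_of_int p ^ b\<bar>
              \<le> real_of_int q powr (-\<eta>)
            \<longrightarrow> is_convergent (\<zeta> powr real_of_int a) (real_of_int p ^ b / real_of_int q ^ b))"
proof -
  define \<theta> where "\<theta> = \<zeta> powr (real_of_int a / real b)"
  have "\<theta> ^ b = \<zeta> powr real_of_int a"
    using assms(1,3) by (simp add: \<theta>_def powr_powr flip: powr_realpow)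
  moreover have "\<exists>p q :: int. coprime p q \<and> q \<ge> 1 \<and>
      \<bar>real_of_int q ^ b * \<theta> ^ b - real_of_int p ^ b\<bar> \<le> real_of_int q powr - \<eta>"
    if \<eta>: "\<eta> > 0" for \<eta>
  proof -
    obtain p q :: int where pq: "coprime p q" "q > 0" and q: "q > \<lceil>b * (\<bar>\<theta>\<bar> + 1) ^ (b - 1)\<rceil>"
      and close: "\<bar>\<theta> - p / q\<bar> \<le> q powr - (\<eta> + b + 1)"
      by (rule liouville_coprime_approx[OF assms(5)[folded \<theta>_def], where \<mu> = "\<eta> + b + 1"])
        (use \<eta> in simp)
    moreover have "b * (\<bar>\<theta>\<bar> + 1) ^ (b - 1) \<le> q"
      using q le_of_int_ceiling[of "b * (\<bar>\<theta>\<bar> + 1) ^ (b - 1)"] by linarith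
    ultimately show ?thesis
      using power_error_le_if_close[OF assms(1) _ _ _ close] \<eta> by fastforce
  qed
  moreover have "\<exists>Q. \<forall>p q :: int. coprime p q \<and> q \<ge> 1 \<and> real_of_int q \<ge> Q \<and>
            \<bar>real_of_int q ^ b * \<zeta> powr real_of_int a - real_of_int p ^ b\<bar> \<le> real_of_int q powr - \<eta>
            \<longrightarrow> is_convergent (\<zeta> powr real_of_int a) (real_of_int p ^ b / real_of_int q ^ b)"
    if "\<eta> > real b" for \<eta>
    using is_convergent_power_ratio[OF that] by blast
  ultimately show ?thesis
    by auto
qed

end
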